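(* Let $n\ge 2$ and let $g^K\in\mathcal{G}^K_{n,C}$ be a ranked labeled tree on the leaf set $[n]=\{1,\dots,n\}$ that is compatible with a given Kingman perfect phylogeny $\mathcal{T}^K$. For $i=1,\dots,n-1$, let $g^K_{i,1}$ and $g^K_{i,2}$ be the two subtrees (clades) of $g^K$ that are merged at the $i$-th coalescent event (i.e. the two child subtrees of the internal node of rank $i$), and let $|g^K_{i,j}|$ denote the number of leaves of $g^K_{i,j}$. Let $c^{LT}(g^K)$ be the number of ranked labeled trees $g'^K\in\mathcal{G}^K_{n,C}$ with $LT(g'^K)=LT(g^K)$. Then $$c^{LT}(g^K)=\prod_{i=1}^{n-1}\frac{(|g^K_{i,1}|+|g^K_{i,2}|-2)!}{(|g^K_{i,1}|-1)!\,(|g^K_{i,2}|-1)!}.$$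
   Context: A ranked labeled tree on $[n]$ is a rooted binary tree with $n$ leaves bijectively labeled by $[n]$, together with a ranking of its $n-1$ internal nodes, i.e. a bijection from internal nodes to $\{1,\dots,n-1\}$ such that every internal node has smaller rank than its parent (rank $i$ = the $i$-th coalescence, read from the leaves to the root). Two ranked labeled trees are equal if there is a leaf-label-preserving and rank-preserving isomorphism between them. For a ranked labeled tree $g^K$, $LT(g^K)$ denotes the unranked labeled tree obtained by forgetting the ranking. A Kingman perfect phylogeny $\mathcal{T}^K$ is a rooted (possibly multifurcating) tree in which each node $v$ carries a (possibly empty) set of individual labels, these sets being pairwise disjoint with union $[n]$. For a node $v$, let $D(v)$ be the union of the label sets of all nodes in the subtree of $\mathcal{T}^K$ rooted at $v$. A ranked labeled tree $g^K$ on $[n]$ is compatible with $\mathcal{T}^K$ if for every node $v$ of $\mathcal{T}^K$ with $D(v)\neq\emptyset$, the set $D(v)$ is exactly the leaf set of some subtree (clade) of $g^K$. $\mathcal{G}^K_{n,C}$ denotes the set of ranked labeled trees on $[n]$ compatible with $\mathcal{T}^K$. *)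

theory Defs
  imports Complex_Main
begin

text \<open>A ranked labeled tree on [n] = {1..n} is encoded canonically by the map sending each
rank i in {1..n-1} to the leaf set (clade) below the internal node of rank i
(and sending every other natural number to the empty set).  Two ranked labeled trees are
equal (up to leaf-label and rank preserving isomorphism) iff these maps coincide.\<close>

definition leaf_clades :: "nat \<Rightarrow> nat set set" where
  "leaf_clades n = {{k} | k. k \<in> {1..n}}"

text \<open>Blocks after the first j coalescences: maximal elements among leaves and the clades of
ranks 1..j.\<close>
definition blocks :: "nat \<Rightarrow> (nat \<Rightarrow> nat set) \<Rightarrow> nat \<Rightarrow> nat set set" where
  "blocks n c j = {S. S \<in> leaf_clades n \<union> c ` {1..j} \<and> \<not> (\<exists>T \<in> c ` {1..j}. S \<subset> T)}"

definition is_child_pair :: "nat \<Rightarrow> (nat \<Rightarrow> nat set) \<Rightarrow> nat \<Rightarrow> nat set \<Rightarrow> nat set \<Rightarrow> bool" where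
  "is_child_pair n c i A B \<longleftrightarrow>
     A \<in> blocks n c (i - 1) \<and> B \<in> blocks n c (i - 1) \<and> A \<noteq> B \<and> c i = A \<union> B"

definition ranked_tree :: "nat \<Rightarrow> (nat \<Rightarrow> nat set) \<Rightarrow> bool" where
  "ranked_tree n c \<longleftrightarrow>
     (\<forall>i \<in> {1..n-1}. \<exists>A B. is_child_pair n c i A B) \<and>
     (\<forall>i. i \<notin> {1..n-1} \<longrightarrow> c i = {})"

definition clades :: "nat \<Rightarrow> (nat \<Rightarrow> nat set) \<Rightarrow> nat set set" where
  "clades n c = leaf_clades n \<union> c ` {1..n-1}"

text \<open>The unranked labeled tree LT(g): the (nontrivial) clade system, forgetting ranks.\<close>
definition LT :: "nat \<Rightarrow> (nat \<Rightarrow> nat set) \<Rightarrow> nat set set" where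
  "LT n c = c ` {1..n-1}"

datatype ptree = PNode "nat set" "ptree list"

fun D :: "ptree \<Rightarrow> nat set" where
  "D (PNode L ts) = L \<union> \<Union> (set (map D ts))"

fun subtrees :: "ptree \<Rightarrow> ptree set" where
  "subtrees (PNode L ts) = insert (PNode L ts) (\<Union> (set (map subtrees ts)))"

fun label_list :: "ptree \<Rightarrow> nat set list" where
  "label_list (PNode L ts) = L # concat (map label_list ts)"

definition kingman_pp :: "nat \<Rightarrow> ptree \<Rightarrow> bool" where
  "kingman_pp n T \<longleftrightarrow>
     (\<forall>i < length (label_list T). \<forall>j < length (label_list T).
        i \<noteq> j \<longrightarrow> label_list T ! i \<inter> label_list T ! j = {}) \<and>
     \<Union> (set (label_list T)) = {1..n}"

definition compatible :: "nat \<Rightarrow> ptree \<Rightarrow> (nat \<Rightarrow> nat set) \<Rightarrow> bool" where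
  "compatible n T c \<longleftrightarrow> (\<forall>v \<in> subtrees T. D v \<noteq> {} \<longrightarrow> D v \<in> clades n c)"

definition GK :: "nat \<Rightarrow> ptree \<Rightarrow> (nat \<Rightarrow> nat set) set" where
  "GK n T = {c. ranked_tree n c \<and> compatible n T c}"

definition cLT :: "nat \<Rightarrow> ptree \<Rightarrow> (nat \<Rightarrow> nat set) \<Rightarrow> nat" where
  "cLT n T c = card {c' \<in> GK n T. LT n c' = LT n c}"

end

(*
  The rankings of a ranked tree g that keep its unranked tree are exactly the linear extensions
  of its clade set LT n g under strict inclusion, and membership in G^K_{n,C} depends only on the
  clades; so c^LT(g) counts the linear extensions of a laminar family. By the hook-length formula
  for forests this number is (n-1)! divided by the product of the hooks, and the hook of the
  clade g i of rank i is |g i| - 1, the number of internal nodes below it. On the other hand,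
  running through the coalescences, the product of (|E| - 1)! over the current blocks E is
  multiplied at rank i by the i-th factor of the claimed product times |g i| - 1; it starts at 1
  on the leaves and ends at (n-1)! on the root. Comparing the two identities gives the formula.
*)

theory Submission
  imports Defs "HOL-Library.Disjoint_Sets"
begin

(* Encoded like ranked trees: f i is the i-th set of the order, and f vanishes outside {1..card P}. *)
definition linear_extensions :: "'a set set \<Rightarrow> (nat \<Rightarrow> 'a set) set" where
  "linear_extensions P = {f. (\<forall>i. i \<notin> {1..card P} \<longrightarrow> f i = {}) \<and> bij_betw f {1..card P} P \<and>
      (\<forall>i\<in>{1..card P}. \<forall>j\<in>{1..card P}. f i \<subset> f j \<longrightarrow> i < j)}"

definition hook :: "'a set set \<Rightarrow> 'a set \<Rightarrow> nat" where
  "hook P X = card {Y\<in>P. Y \<subseteq> X}"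

definition laminar :: "'a set set \<Rightarrow> bool" where
  "laminar P \<longleftrightarrow> (\<forall>X\<in>P. \<forall>Y\<in>P. X \<subseteq> Y \<or> Y \<subseteq> X \<or> X \<inter> Y = {})"

definition maximal_sets :: "'a set set \<Rightarrow> 'a set set" where
  "maximal_sets P = {X\<in>P. \<not> (\<exists>Y\<in>P. X \<subset> Y)}"

lemma finite_linear_extensions: "finite P \<Longrightarrow> finite (linear_extensions P)"
proof -
  assume "finite P"
  let ?F = "{f. \<forall>i. (i \<in> {1..card P} \<longrightarrow> f i \<in> P) \<and> (i \<notin> {1..card P} \<longrightarrow> f i = {})}"
  have "linear_extensions P \<subseteq> ?F"
    unfolding linear_extensions_def bij_betw_def by auto
  moreover have "finite ?F"
    using finite_set_of_finite_funs[of "{1..card P}" P "{}"] \<open>finite P\<close> by simp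
  ultimately show ?thesis by (rule finite_subset)
qed

lemma linear_extensions_last_maximal:
  assumes "f \<in> linear_extensions P" "card P = Suc M"
  shows "f (Suc M) \<in> maximal_sets P"
proof -
  have b: "bij_betw f {1..Suc M} P"
    and mono: "\<forall>i\<in>{1..Suc M}. \<forall>j\<in>{1..Suc M}. f i \<subset> f j \<longrightarrow> i < j"
    using assms unfolding linear_extensions_def by auto
  have "\<not> f (Suc M) \<subset> Y" if "Y \<in> P" for Y
  proof
    assume "f (Suc M) \<subset> Y"
    moreover obtain j where "j \<in> {1..Suc M}" "Y = f j"
      using b \<open>Y \<in> P\<close> unfolding bij_betw_def by blast
    moreover have "Suc M \<in> {1..Suc M}" by simp
    ultimately have "Suc M < j" using mono by blast
    then show False using \<open>j \<in> {1..Suc M}\<close> by simp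
  qed
  moreover have "f (Suc M) \<in> P" using b by (auto simp: bij_betw_def)
  ultimately show ?thesis by (auto simp: maximal_sets_def)
qed

lemma linear_extensions_remove_last:
  assumes f: "f \<in> linear_extensions P" and card: "card P = Suc M"
  shows "f(Suc M := {}) \<in> linear_extensions (P - {f (Suc M)})"
proof -
  have zero: "\<forall>i. i \<notin> {1..Suc M} \<longrightarrow> f i = {}" and b: "bij_betw f {1..Suc M} P"
    and mono: "\<forall>i\<in>{1..Suc M}. \<forall>j\<in>{1..Suc M}. f i \<subset> f j \<longrightarrow> i < j"
    using f card unfolding linear_extensions_def by auto
  have "f (Suc M) \<in> P" using b by (auto simp: bij_betw_def)
  then have card': "card (P - {f (Suc M)}) = M"
    using card by (simp add: card_Diff_singleton)
  have "bij_betw f ({1..Suc M} - {Suc M}) (P - {f (Suc M)})"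
    using b by (rule bij_betw_DiffI) (use \<open>f (Suc M) \<in> P\<close> in auto)
  moreover have "{1..Suc M} - {Suc M} = {1..M}" by auto
  ultimately have "bij_betw f {1..M} (P - {f (Suc M)})" by simp
  then have "bij_betw (f(Suc M := {})) {1..M} (P - {f (Suc M)})"
    by (rule bij_betw_cong[THEN iffD1, rotated]) auto
  with zero mono card' show ?thesis by (auto simp: linear_extensions_def)
qed

lemma linear_extensions_append_maximal:
  assumes g: "g \<in> linear_extensions (P - {x})" and card: "card P = Suc M"
    and x: "x \<in> maximal_sets P"
  shows "g(Suc M := x) \<in> linear_extensions P"
proof -
  have xP: "x \<in> P" and x_max: "\<And>Y. Y \<in> P \<Longrightarrow> \<not> x \<subset> Y"
    using x by (auto simp: maximal_sets_def)
  have card': "card (P - {x}) = M"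
    using card xP by (simp add: card_Diff_singleton)
  let ?f = "g(Suc M := x)"
  have zero: "\<forall>i. i \<notin> {1..M} \<longrightarrow> g i = {}" and b: "bij_betw g {1..M} (P - {x})"
    and mono: "\<forall>i\<in>{1..M}. \<forall>j\<in>{1..M}. g i \<subset> g j \<longrightarrow> i < j"
    using g card' unfolding linear_extensions_def by auto
  have "bij_betw ?f {1..M} (P - {x})"
    by (rule bij_betw_cong[THEN iffD1, OF _ b]) auto
  then have "bij_betw ?f ({1..M} \<union> {Suc M}) ((P - {x}) \<union> {x})"
    using notIn_Un_bij_betw[of "Suc M" "{1..M}" ?f "P - {x}"] by auto
  moreover have "{1..M} \<union> {Suc M} = {1..Suc M}" "(P - {x}) \<union> {x} = P"
    using xP by auto
  ultimately have b': "bij_betw ?f {1..Suc M} P" by simp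
  have "i < j" if "i \<in> {1..Suc M}" "j \<in> {1..Suc M}" "?f i \<subset> ?f j" for i j
  proof (cases "i = Suc M")
    case True
    have "?f j \<in> P" using b' that(2) by (rule bij_betw_apply)
    then show ?thesis using x_max that(3) True by simp
  next
    case False
    then show ?thesis using mono that by (cases "j = Suc M") auto
  qed
  with zero b' card show ?thesis by (auto simp: linear_extensions_def)
qed

lemma card_linear_extensions_with_last:
  assumes card: "card P = Suc M" and x: "x \<in> maximal_sets P"
  shows "card {f \<in> linear_extensions P. f (Suc M) = x} = card (linear_extensions (P - {x}))"
proof -
  have "bij_betw (\<lambda>f. f(Suc M := {})) {f \<in> linear_extensions P. f (Suc M) = x}
      (linear_extensions (P - {x}))"
  proof (rule bij_betw_byWitness[where f'="\<lambda>g. g(Suc M := x)"])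
    show "\<forall>f\<in>{f \<in> linear_extensions P. f (Suc M) = x}. f(Suc M := {}, Suc M := x) = f"
      by auto
    have "card (P - {x}) = M"
      using card x by (simp add: card_Diff_singleton maximal_sets_def)
    then have "g (Suc M) = {}" if "g \<in> linear_extensions (P - {x})" for g
      using that by (simp add: linear_extensions_def)
    then show "\<forall>g\<in>linear_extensions (P - {x}). g(Suc M := x, Suc M := {}) = g"
      by (auto simp: fun_eq_iff)
    show "(\<lambda>f. f(Suc M := {})) ` {f \<in> linear_extensions P. f (Suc M) = x}
        \<subseteq> linear_extensions (P - {x})"
      using linear_extensions_remove_last[OF _ card] by auto
    show "(\<lambda>g. g(Suc M := x)) ` linear_extensions (P - {x})
        \<subseteq> {f \<in> linear_extensions P. f (Suc M) = x}"
      using linear_extensions_append_maximal[OF _ card x] by auto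
  qed
  then show ?thesis by (rule bij_betw_same_card)
qed

lemma card_linear_extensions_Suc:
  assumes card: "card P = Suc M"
  shows "card (linear_extensions P) = (\<Sum>x\<in>maximal_sets P. card (linear_extensions (P - {x})))"
proof -
  have fin: "finite P" using card by (simp add: card_ge_0_finite)
  have "linear_extensions P = (\<Union>x\<in>maximal_sets P. {f \<in> linear_extensions P. f (Suc M) = x})"
    using linear_extensions_last_maximal[OF _ card] by blast
  then have "card (linear_extensions P)
      = card (\<Union>x\<in>maximal_sets P. {f \<in> linear_extensions P. f (Suc M) = x})"
    by (rule arg_cong)
  also have "\<dots> = (\<Sum>x\<in>maximal_sets P. card {f \<in> linear_extensions P. f (Suc M) = x})"
    by (rule card_UN_disjoint) (use fin finite_linear_extensions[OF fin] in \<open>auto simp: maximal_sets_def\<close>)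
  also have "\<dots> = (\<Sum>x\<in>maximal_sets P. card (linear_extensions (P - {x})))"
    using card_linear_extensions_with_last[OF card] by simp
  finally show ?thesis .
qed

lemma sum_hook_maximal_sets:
  assumes fin: "finite P" and ne: "{} \<notin> P" and lam: "laminar P"
  shows "(\<Sum>X\<in>maximal_sets P. hook P X) = card P"
proof -
  have cover: "(\<Union>X\<in>maximal_sets P. {Y\<in>P. Y \<subseteq> X}) = P"
  proof (intro equalityI subsetI)
    fix Y assume "Y \<in> P"
    from finite_has_maximal2[OF fin this] obtain X
      where "X \<in> P" "Y \<subseteq> X" "\<forall>Z\<in>P. X \<subseteq> Z \<longrightarrow> X = Z" by blast
    then have "X \<in> maximal_sets P" by (auto simp: maximal_sets_def)
    then show "Y \<in> (\<Union>X\<in>maximal_sets P. {Y\<in>P. Y \<subseteq> X})"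
      using \<open>Y \<in> P\<close> \<open>Y \<subseteq> X\<close> by blast
  qed (auto simp: maximal_sets_def)
  have disjoint: "{Y\<in>P. Y \<subseteq> X} \<inter> {Y\<in>P. Y \<subseteq> X'} = {}"
    if X: "X \<in> maximal_sets P" and X': "X' \<in> maximal_sets P" and "X \<noteq> X'" for X X'
  proof -
    have "\<not> X \<subseteq> X'" "\<not> X' \<subseteq> X"
      using that by (auto simp: maximal_sets_def)
    then have "X \<inter> X' = {}"
      using lam X X' unfolding laminar_def maximal_sets_def by blast
    then have "Y = {}" if "Y \<subseteq> X" "Y \<subseteq> X'" for Y
      using that by blast
    then show ?thesis using ne by blast
  qed
  have "card (\<Union>X\<in>maximal_sets P. {Y\<in>P. Y \<subseteq> X})
      = (\<Sum>X\<in>maximal_sets P. card {Y\<in>P. Y \<subseteq> X})"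
    by (rule card_UN_disjoint) (use fin disjoint in \<open>auto simp: maximal_sets_def\<close>)
  then show ?thesis using cover by (simp add: hook_def)
qed

lemma hook_remove_maximal:
  assumes "x \<in> maximal_sets P" "X \<in> P - {x}"
  shows "hook (P - {x}) X = hook P X"
proof -
  have "{Y \<in> P - {x}. Y \<subseteq> X} = {Y \<in> P. Y \<subseteq> X}"
    using assms by (auto simp: maximal_sets_def)
  then show ?thesis by (simp add: hook_def)
qed

theorem linear_extensions_hook_formula:
  assumes "finite P" "{} \<notin> P" "laminar P"
  shows "real (card (linear_extensions P)) * (\<Prod>X\<in>P. real (hook P X)) = fact (card P)"
  using assms
proof (induction "card P" arbitrary: P)
  case 0
  then have "linear_extensions P = {\<lambda>_. {}}"
    by (auto simp: linear_extensions_def fun_eq_iff bij_betw_def)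
  with 0 show ?case by simp
next
  case (Suc M)
  have step: "real (card (linear_extensions (P - {x}))) * (\<Prod>X\<in>P. real (hook P X))
      = fact M * real (hook P x)"
    if x: "x \<in> maximal_sets P" for x
  proof -
    have "x \<in> P" using x by (simp add: maximal_sets_def)
    then have "M = card (P - {x})"
      using Suc.hyps(2)[symmetric] by (simp add: card_Diff_singleton)
    then have "real (card (linear_extensions (P - {x}))) * (\<Prod>X\<in>P - {x}. real (hook (P - {x}) X))
        = fact M"
      using Suc.hyps(1)[of "P - {x}"] Suc.prems by (auto simp: laminar_def)
    moreover have "(\<Prod>X\<in>P. real (hook P X)) = real (hook P x) * (\<Prod>X\<in>P - {x}. real (hook P X))"
      using Suc.prems(1) \<open>x \<in> P\<close> by (rule prod.remove)
    ultimately show ?thesis using hook_remove_maximal[OF x] by simp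
  qed
  have "real (card (linear_extensions P)) * (\<Prod>X\<in>P. real (hook P X))
      = (\<Sum>x\<in>maximal_sets P. real (card (linear_extensions (P - {x}))) * (\<Prod>X\<in>P. real (hook P X)))"
    by (simp add: card_linear_extensions_Suc[OF Suc.hyps(2)[symmetric]] sum_distrib_right)
  also have "\<dots> = fact M * real (\<Sum>x\<in>maximal_sets P. hook P x)"
    by (simp add: step sum_distrib_left)
  also have "\<dots> = fact (Suc M)"
    using sum_hook_maximal_sets[OF Suc.prems] Suc.hyps(2)[symmetric] by simp
  finally show ?case using Suc.hyps(2) by simp
qed

lemma partition_on_eq_if_inter:
  "partition_on S Q \<Longrightarrow> X \<in> Q \<Longrightarrow> Y \<in> Q \<Longrightarrow> X \<inter> Y \<noteq> {} \<Longrightarrow> X = Y"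
  by (meson disjointD partition_onD2)

lemma partition_on_merge:
  assumes Q: "partition_on S Q" and "A \<in> Q" "B \<in> Q"
  shows "partition_on S (insert (A \<union> B) (Q - {A, B}))"
proof (rule partition_onI)
  show "\<Union> (insert (A \<union> B) (Q - {A, B})) = S"
    using assms partition_onD1[OF Q] by auto
  show "{} \<notin> insert (A \<union> B) (Q - {A, B})"
    using assms partition_onD3[OF Q] by auto
  show "disjnt X Y" if "X \<in> insert (A \<union> B) (Q - {A, B})" "Y \<in> insert (A \<union> B) (Q - {A, B})"
    "X \<noteq> Y" for X Y
  proof -
    have "Z \<inter> (A \<union> B) = {}" if "Z \<in> Q - {A, B}" for Z
      using that partition_on_eq_if_inter[OF Q _ \<open>A \<in> Q\<close>, of Z]
        partition_on_eq_if_inter[OF Q _ \<open>B \<in> Q\<close>, of Z] by blast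
    moreover have "X \<inter> Y = {}" if "X \<in> Q" "Y \<in> Q" "X \<noteq> Y"
      using partition_on_eq_if_inter[OF Q] that by blast
    ultimately show ?thesis using that unfolding disjnt_def by auto
  qed
qed

lemma card_partition_on_merge:
  assumes Q: "partition_on S Q" and "finite Q" "A \<in> Q" "B \<in> Q" "A \<noteq> B"
  shows "card (insert (A \<union> B) (Q - {A, B})) = card Q - 1"
proof -
  have "A \<noteq> {}" using partition_onD3[OF Q] \<open>A \<in> Q\<close> by auto
  then have "A \<union> B \<notin> Q - {A, B}"
    using partition_on_eq_if_inter[OF Q _ \<open>A \<in> Q\<close>, of "A \<union> B"] by auto
  moreover have "card {A, B} \<le> card Q"
    using assms by (intro card_mono) auto
  ultimately show ?thesis
    using assms by (simp add: card_Diff_subset card_insert_disjoint)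
qed

lemma blocks_0: "blocks n c 0 = leaf_clades n"
  unfolding blocks_def leaf_clades_def by auto

lemma ex_block_superset:
  assumes "X \<in> leaf_clades n \<union> c ` {1..j}"
  shows "\<exists>E\<in>blocks n c j. X \<subseteq> E"
proof -
  obtain E where "E \<in> insert X (c ` {1..j})" "X \<subseteq> E"
    and E_max: "\<forall>F\<in>insert X (c ` {1..j}). E \<subseteq> F \<longrightarrow> E = F"
    using finite_has_maximal2[of "insert X (c ` {1..j})" X] by blast
  then have "E \<in> blocks n c j" using assms unfolding blocks_def by auto
  with \<open>X \<subseteq> E\<close> show ?thesis by blast
qed

lemma blocks_merge:
  assumes j: "1 \<le> j" and Q: "partition_on {1..n} (blocks n c (j - 1))"
    and AB: "is_child_pair n c j A B"
  shows "blocks n c j = insert (A \<union> B) (blocks n c (j - 1) - {A, B})"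
proof -
  let ?Q = "blocks n c (j - 1)"
  have A: "A \<in> ?Q" and B: "B \<in> ?Q" and "A \<noteq> B" and cj: "c j = A \<union> B"
    using AB unfolding is_child_pair_def by auto
  have "A \<noteq> {}" "B \<noteq> {}" using A B partition_onD3[OF Q] by auto
  have "A \<inter> B = {}" using partition_on_eq_if_inter[OF Q A B] \<open>A \<noteq> B\<close> by blast
  have image: "c ` {1..j} = insert (A \<union> B) (c ` {1..j - 1})"
    using j cj by (cases j) (auto simp: atLeastAtMostSuc_conv)
  have below_merged: "\<not> A \<union> B \<subset> T" if T: "T \<in> c ` {1..j - 1}" for T
  proof
    assume "A \<union> B \<subset> T"
    obtain E where "E \<in> ?Q" "T \<subseteq> E"
      using ex_block_superset[of T n c "j - 1"] T by blast
    then have "A = E" "B = E"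
      using partition_on_eq_if_inter[OF Q A] partition_on_eq_if_inter[OF Q B]
        \<open>A \<union> B \<subset> T\<close> \<open>A \<noteq> {}\<close> \<open>B \<noteq> {}\<close> by blast+
    with \<open>A \<noteq> B\<close> show False by simp
  qed
  have not_below_merged: "\<not> S \<subset> A \<union> B" if "S \<in> ?Q - {A, B}" for S
  proof
    assume "S \<subset> A \<union> B"
    moreover have "S \<noteq> {}" using that partition_onD3[OF Q] by auto
    ultimately have "S \<inter> A \<noteq> {} \<or> S \<inter> B \<noteq> {}" by blast
    then show False
      using that partition_on_eq_if_inter[OF Q _ A] partition_on_eq_if_inter[OF Q _ B] by blast
  qed
  have "A \<subset> A \<union> B" "B \<subset> A \<union> B"
    using \<open>A \<inter> B = {}\<close> \<open>A \<noteq> {}\<close> \<open>B \<noteq> {}\<close> by auto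
  then show ?thesis
    using below_merged not_below_merged unfolding blocks_def image by auto
qed

(* The binomial coefficient counting the interleavings of the rankings of two sibling subtrees. *)
definition merge_weight :: "'a set \<Rightarrow> 'a set \<Rightarrow> real" where
  "merge_weight A B = fact (card A + card B - 2) / (fact (card A - 1) * fact (card B - 1))"

lemma merge_weight_mult_fact:
  assumes "finite A" "finite B" "A \<noteq> {}" "B \<noteq> {}" "A \<inter> B = {}"
  shows "merge_weight A B * real (card (A \<union> B) - 1) * (fact (card A - 1) * fact (card B - 1))
    = fact (card (A \<union> B) - 1)"
proof -
  obtain a b where a: "card A = Suc a" and b: "card B = Suc b"
    using assms by (metis card_0_eq not0_implies_Suc)
  have "card (A \<union> B) = Suc (Suc (a + b))" using assms a b by (simp add: card_Un_disjoint)
  then show ?thesis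
    using a b by (simp add: merge_weight_def fact_Suc[of "a + b"] field_simps)
qed

context
  fixes n :: nat and c :: "nat \<Rightarrow> nat set"
  assumes ranked: "ranked_tree n c"
begin

lemma ex_child_pair: "i \<in> {1..n-1} \<Longrightarrow> \<exists>A B. is_child_pair n c i A B"
  using ranked unfolding ranked_tree_def by blast

lemma partition_on_blocks_card:
  "j \<le> n - 1 \<Longrightarrow> partition_on {1..n} (blocks n c j) \<and> card (blocks n c j) = n - j"
proof (induction j)
  case 0
  have "leaf_clades n = (\<lambda>k. {k}) ` {1..n}" unfolding leaf_clades_def by auto
  moreover have "card ((\<lambda>k. {k}) ` {1..n}) = n" by (subst card_image) (auto simp: inj_on_def)
  ultimately show ?case by (simp add: blocks_0 partition_on_singletons)
next
  case (Suc j)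
  then have Q: "partition_on {1..n} (blocks n c j)" and card: "card (blocks n c j) = n - j"
    by auto
  obtain A B where AB: "is_child_pair n c (Suc j) A B"
    using ex_child_pair Suc.prems by fastforce
  then have "A \<in> blocks n c j" "B \<in> blocks n c j" "A \<noteq> B"
    by (auto simp: is_child_pair_def)
  moreover have "finite (blocks n c j)" using finite_elements[OF _ Q] by simp
  moreover have "blocks n c (Suc j) = insert (A \<union> B) (blocks n c j - {A, B})"
    using blocks_merge[of "Suc j" n c A B] Q AB by simp
  ultimately show ?case
    using partition_on_merge[OF Q] card_partition_on_merge[OF Q] card by simp
qed

lemma partition_on_blocks: "j \<le> n - 1 \<Longrightarrow> partition_on {1..n} (blocks n c j)"
  using partition_on_blocks_card by blast

lemma finite_blocks: "j \<le> n - 1 \<Longrightarrow> finite (blocks n c j)"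
  using partition_on_blocks finite_elements[of "{1..n}"] by blast

lemma blocks_last: "1 \<le> n \<Longrightarrow> blocks n c (n - 1) = {{1..n}}"
proof -
  assume "1 \<le> n"
  then have "card (blocks n c (n - 1)) = 1" using partition_on_blocks_card by simp
  then obtain E where E: "blocks n c (n - 1) = {E}" by (rule card_1_singletonE)
  moreover have "{1..n} = \<Union> (blocks n c (n - 1))"
    using partition_onD1[OF partition_on_blocks[of "n - 1"]] by simp
  ultimately have "E = {1..n}" by simp
  with E show ?thesis by simp
qed

lemma child_pair_facts:
  assumes i: "i \<in> {1..n-1}" and AB: "is_child_pair n c i A B"
  shows "A \<noteq> {}" "B \<noteq> {}" "A \<inter> B = {}" "finite A" "finite B"
    and "blocks n c i = insert (A \<union> B) (blocks n c (i - 1) - {A, B})"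
proof -
  have Q: "partition_on {1..n} (blocks n c (i - 1))" using i by (intro partition_on_blocks) auto
  have A: "A \<in> blocks n c (i - 1)" and B: "B \<in> blocks n c (i - 1)" and "A \<noteq> B"
    using AB by (auto simp: is_child_pair_def)
  show "A \<noteq> {}" "B \<noteq> {}" using A B partition_onD3[OF Q] by auto
  show "A \<inter> B = {}" using partition_on_eq_if_inter[OF Q A B] \<open>A \<noteq> B\<close> by blast
  have "A \<subseteq> {1..n}" "B \<subseteq> {1..n}" using A B partition_onD1[OF Q] by auto
  then show "finite A" "finite B" by (auto intro: finite_subset)
  show "blocks n c i = insert (A \<union> B) (blocks n c (i - 1) - {A, B})"
    using blocks_merge[OF _ Q AB] i by simp
qed

lemma card_clade_child_pair:
  assumes "i \<in> {1..n-1}" "is_child_pair n c i A B"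
  shows "card (c i) = card A + card B"
  using child_pair_facts[OF assms] assms(2) by (simp add: is_child_pair_def card_Un_disjoint)

lemma clade_in_blocks: "i \<in> {1..n-1} \<Longrightarrow> c i \<in> blocks n c i"
proof -
  assume i: "i \<in> {1..n-1}"
  then obtain A B where AB: "is_child_pair n c i A B" using ex_child_pair by blast
  then have "c i = A \<union> B" by (simp add: is_child_pair_def)
  then show ?thesis using child_pair_facts(6)[OF i AB] by simp
qed

lemma two_le_card_clade: "i \<in> {1..n-1} \<Longrightarrow> 2 \<le> card (c i)"
proof -
  assume i: "i \<in> {1..n-1}"
  then obtain A B where AB: "is_child_pair n c i A B" using ex_child_pair by blast
  have "card A \<ge> 1" "card B \<ge> 1"
    using child_pair_facts[OF i AB] by (auto simp: Suc_le_eq card_gt_0_iff)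
  then show ?thesis using card_clade_child_pair[OF i AB] by simp
qed

lemma earlier_clade_in_block:
  "k \<in> {1..n-1} \<Longrightarrow> k < i \<Longrightarrow> \<exists>E\<in>blocks n c (i - 1). c k \<subseteq> E"
  by (rule ex_block_superset) auto

lemma clade_not_subset_earlier:
  assumes k: "k \<in> {1..n-1}" and i: "i \<in> {1..n-1}" and "k < i"
  shows "\<not> c i \<subseteq> c k"
proof
  assume "c i \<subseteq> c k"
  obtain A B where AB: "is_child_pair n c i A B" using ex_child_pair i by blast
  have Q: "partition_on {1..n} (blocks n c (i - 1))" using i by (intro partition_on_blocks) auto
  obtain E where E: "E \<in> blocks n c (i - 1)" "c k \<subseteq> E"
    using earlier_clade_in_block[OF k \<open>k < i\<close>] by blast
  have "A \<in> blocks n c (i - 1)" "B \<in> blocks n c (i - 1)" "A \<noteq> B" "c i = A \<union> B"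
    using AB by (auto simp: is_child_pair_def)
  moreover have "A \<inter> E \<noteq> {}" "B \<inter> E \<noteq> {}"
    using child_pair_facts(1,2)[OF i AB] \<open>c i \<subseteq> c k\<close> E(2) calculation(4) by blast+
  ultimately show False using partition_on_eq_if_inter[OF Q _ E(1)] by blast
qed

lemma earlier_clade_subset_or_disjoint:
  assumes k: "k \<in> {1..n-1}" and i: "i \<in> {1..n-1}" and "k < i"
  shows "c k \<subseteq> c i \<or> c k \<inter> c i = {}"
proof -
  obtain A B where AB: "is_child_pair n c i A B" using ex_child_pair i by blast
  have Q: "partition_on {1..n} (blocks n c (i - 1))" using i by (intro partition_on_blocks) auto
  obtain E where E: "E \<in> blocks n c (i - 1)" "c k \<subseteq> E"
    using earlier_clade_in_block[OF k \<open>k < i\<close>] by blast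
  have A: "A \<in> blocks n c (i - 1)" and B: "B \<in> blocks n c (i - 1)" and ci: "c i = A \<union> B"
    using AB by (auto simp: is_child_pair_def)
  have "E = A \<or> E = B \<or> E \<inter> c i = {}"
    using partition_on_eq_if_inter[OF Q E(1) A] partition_on_eq_if_inter[OF Q E(1) B] ci by blast
  then show ?thesis using E(2) ci by blast
qed

lemma inj_on_clades: "inj_on c {1..n-1}"
proof (rule inj_onI)
  fix i k assume "i \<in> {1..n-1}" "k \<in> {1..n-1}" "c i = c k"
  then show "i = k"
    using clade_not_subset_earlier[of i k] clade_not_subset_earlier[of k i]
    by (cases i k rule: linorder_cases) auto
qed

lemma laminar_LT: "laminar (LT n c)"
  unfolding laminar_def LT_def
proof (intro ballI)
  fix X Y assume "X \<in> c ` {1..n-1}" "Y \<in> c ` {1..n-1}"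
  then obtain i k where i: "i \<in> {1..n-1}" and k: "k \<in> {1..n-1}" and "X = c i" "Y = c k"
    by blast
  moreover consider "i < k" | "k < i" | "i = k" by arith
  then have "c i \<subseteq> c k \<or> c k \<subseteq> c i \<or> c i \<inter> c k = {}"
    using earlier_clade_subset_or_disjoint[OF i k] earlier_clade_subset_or_disjoint[OF k i]
    by cases auto
  ultimately show "X \<subseteq> Y \<or> Y \<subseteq> X \<or> X \<inter> Y = {}" by simp
qed

lemma clade_nonempty: "i \<in> {1..n-1} \<Longrightarrow> c i \<noteq> {}"
  using two_le_card_clade by fastforce

lemma empty_notin_LT: "{} \<notin> LT n c"
  using clade_nonempty unfolding LT_def by fastforce

lemma earlier_clades_below_merge:
  assumes i: "i \<in> {1..n-1}" and AB: "is_child_pair n c i A B"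
  shows "{k\<in>{1..i}. c k \<subseteq> A \<union> B} = insert i ({k\<in>{1..i-1}. c k \<subseteq> A} \<union> {k\<in>{1..i-1}. c k \<subseteq> B})"
proof -
  have Q: "partition_on {1..n} (blocks n c (i - 1))" using i by (intro partition_on_blocks) auto
  have A: "A \<in> blocks n c (i - 1)" and B: "B \<in> blocks n c (i - 1)" and ci: "c i = A \<union> B"
    using AB by (auto simp: is_child_pair_def)
  have below: "c k \<subseteq> A \<or> c k \<subseteq> B" if k: "k \<in> {1..i-1}" and "c k \<subseteq> A \<union> B" for k
  proof -
    have "k \<in> {1..n-1}" "k < i" using i k by auto
    then obtain E where E: "E \<in> blocks n c (i - 1)" "c k \<subseteq> E"
      using earlier_clade_in_block by blast
    have "E \<inter> A \<noteq> {} \<or> E \<inter> B \<noteq> {}"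
      using clade_nonempty[OF \<open>k \<in> {1..n-1}\<close>] \<open>c k \<subseteq> A \<union> B\<close> E(2) by blast
    then have "E = A \<or> E = B"
      using partition_on_eq_if_inter[OF Q E(1) A] partition_on_eq_if_inter[OF Q E(1) B] by blast
    then show ?thesis using E(2) by blast
  qed
  have "{1..i} = insert i {1..i-1}" using i by auto
  then show ?thesis using ci below by blast
qed

lemma card_earlier_clades_in_block:
  "j \<le> n - 1 \<Longrightarrow> E \<in> blocks n c j \<Longrightarrow> card {k\<in>{1..j}. c k \<subseteq> E} = card E - 1"
proof (induction j arbitrary: E)
  case 0
  then show ?case by (auto simp: blocks_0 leaf_clades_def)
next
  case (Suc j)
  have i: "Suc j \<in> {1..n-1}" using Suc.prems by simp
  obtain A B where AB: "is_child_pair n c (Suc j) A B" using ex_child_pair i by blast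
  note facts = child_pair_facts[OF i AB]
  have Q: "partition_on {1..n} (blocks n c j)" using Suc.prems by (intro partition_on_blocks) simp
  have A: "A \<in> blocks n c j" and B: "B \<in> blocks n c j" and ci: "c (Suc j) = A \<union> B"
    using AB by (auto simp: is_child_pair_def)
  show ?case
  proof (cases "E = A \<union> B")
    case True
    have "{k\<in>{1..j}. c k \<subseteq> A} \<inter> {k\<in>{1..j}. c k \<subseteq> B} = {}"
      using facts(3) clade_nonempty Suc.prems(1) by fastforce
    moreover have "card {k\<in>{1..j}. c k \<subseteq> A} = card A - 1" "card {k\<in>{1..j}. c k \<subseteq> B} = card B - 1"
      using Suc.IH A B Suc.prems(1) by auto
    moreover have "card A \<ge> 1" "card B \<ge> 1"
      using facts by (auto simp: Suc_le_eq card_gt_0_iff)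
    ultimately show ?thesis
      using earlier_clades_below_merge[OF i AB] True facts
      by (simp add: card_Un_disjoint card_insert_if)
  next
    case False
    then have E: "E \<in> blocks n c j - {A, B}" using Suc.prems(2) facts(6) by auto
    have "\<not> c (Suc j) \<subseteq> E"
    proof
      assume "c (Suc j) \<subseteq> E"
      then have "E \<inter> A \<noteq> {}" using ci facts(1) by blast
      then show False using partition_on_eq_if_inter[OF Q _ A] E by blast
    qed
    then have "{k\<in>{1..Suc j}. c k \<subseteq> E} = {k\<in>{1..j}. c k \<subseteq> E}"
      using le_Suc_eq by auto
    then show ?thesis using Suc.IH[of E] Suc.prems E by simp
  qed
qed

lemma hook_LT:
  assumes i: "i \<in> {1..n-1}"
  shows "hook (LT n c) (c i) = card (c i) - 1"
proof -
  have "{X \<in> LT n c. X \<subseteq> c i} = c ` {k\<in>{1..n-1}. c k \<subseteq> c i}"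
    unfolding LT_def by blast
  also have "{k\<in>{1..n-1}. c k \<subseteq> c i} = {k\<in>{1..i}. c k \<subseteq> c i}"
    using i clade_not_subset_earlier[OF i] by force
  finally have "hook (LT n c) (c i) = card (c ` {k\<in>{1..i}. c k \<subseteq> c i})"
    by (simp add: hook_def)
  also have "\<dots> = card {k\<in>{1..i}. c k \<subseteq> c i}"
    using i by (intro card_image inj_on_subset[OF inj_on_clades]) auto
  also have "\<dots> = card (c i) - 1"
    using i clade_in_blocks by (intro card_earlier_clades_in_block) auto
  finally show ?thesis .
qed

lemma prod_hook_LT:
  "(\<Prod>X\<in>LT n c. real (hook (LT n c) X)) = (\<Prod>i=1..n-1. real (card (c i) - 1))"
proof -
  have "(\<Prod>X\<in>LT n c. real (hook (LT n c) X)) = (\<Prod>i=1..n-1. real (hook (LT n c) (c i)))"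
    using prod.reindex[OF inj_on_clades, of "\<lambda>X. real (hook (LT n c) X)"] by (simp add: LT_def)
  also have "\<dots> = (\<Prod>i=1..n-1. real (card (c i) - 1))"
    using hook_LT by (intro prod.cong) auto
  finally show ?thesis .
qed

lemma prod_merge_weight_telescope:
  assumes children: "\<forall>i\<in>{1..n-1}. is_child_pair n c i (c1 i) (c2 i)"
  shows "j \<le> n - 1 \<Longrightarrow> (\<Prod>i=1..j. merge_weight (c1 i) (c2 i)) * (\<Prod>i=1..j. real (card (c i) - 1))
    = (\<Prod>E\<in>blocks n c j. fact (card E - 1))"
proof (induction j)
  case 0
  have "(\<Prod>E\<in>leaf_clades n. fact (card E - 1) :: real) = 1"
    by (rule prod.neutral) (auto simp: leaf_clades_def)
  then show ?case by (simp add: blocks_0)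
next
  case (Suc j)
  define A B where "A = c1 (Suc j)" and "B = c2 (Suc j)"
  have i: "Suc j \<in> {1..n-1}" using Suc.prems by simp
  have AB: "is_child_pair n c (Suc j) A B" using children i by (simp add: A_def B_def)
  note facts = child_pair_facts[OF i AB]
  have Q: "partition_on {1..n} (blocks n c j)" and fin: "finite (blocks n c j)"
    using Suc.prems partition_on_blocks finite_blocks by simp_all
  have A: "A \<in> blocks n c j" and B: "B \<in> blocks n c j" and "A \<noteq> B"
    and ci: "c (Suc j) = A \<union> B"
    using AB by (auto simp: is_child_pair_def)
  let ?f = "\<lambda>E. fact (card E - 1) :: real"
  have "A \<union> B \<notin> blocks n c j - {A, B}"
    using partition_on_eq_if_inter[OF Q _ A, of "A \<union> B"] facts(1) by auto
  then have new: "(\<Prod>E\<in>blocks n c (Suc j). ?f E) = ?f (A \<union> B) * (\<Prod>E\<in>blocks n c j - {A, B}. ?f E)"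
    using facts(6) fin by simp
  have old: "(\<Prod>E\<in>blocks n c j. ?f E) = ?f A * ?f B * (\<Prod>E\<in>blocks n c j - {A, B}. ?f E)"
    using fin A B \<open>A \<noteq> B\<close> by (simp add: prod.remove[of _ A] prod.remove[of _ B] Diff_insert2[symmetric])
  have "(\<Prod>i=1..Suc j. merge_weight (c1 i) (c2 i)) * (\<Prod>i=1..Suc j. real (card (c i) - 1))
      = (\<Prod>i=1..j. merge_weight (c1 i) (c2 i)) * (\<Prod>i=1..j. real (card (c i) - 1))
        * (merge_weight A B * real (card (A \<union> B) - 1))"
    by (simp add: A_def B_def ci prod.nat_ivl_Suc' mult_ac)
  also have "\<dots> = merge_weight A B * real (card (A \<union> B) - 1) * (?f A * ?f B)
      * (\<Prod>E\<in>blocks n c j - {A, B}. ?f E)"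
    using Suc.IH Suc.prems old by (simp add: mult_ac)
  also have "\<dots> = (\<Prod>E\<in>blocks n c (Suc j). ?f E)"
    using merge_weight_mult_fact[OF facts(4,5,1-3)] new by simp
  finally show ?case .
qed

lemma card_LT: "card (LT n c) = n - 1"
  unfolding LT_def using card_image[OF inj_on_clades] by simp

lemma in_linear_extensions_LT: "c \<in> linear_extensions (LT n c)"
proof -
  have "i < j" if "i \<in> {1..n-1}" "j \<in> {1..n-1}" "c i \<subset> c j" for i j
    using clade_not_subset_earlier[OF that(2,1)] that(3) by (cases i j rule: linorder_cases) auto
  then show ?thesis
    using ranked inj_on_clades unfolding linear_extensions_def card_LT ranked_tree_def
    by (auto simp: LT_def bij_betw_def)
qed

lemma linear_extensionD:
  assumes "f \<in> linear_extensions (LT n c)"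
  shows "\<forall>i. i \<notin> {1..n-1} \<longrightarrow> f i = {}" and "bij_betw f {1..n-1} (LT n c)"
    and "\<forall>i\<in>{1..n-1}. \<forall>j\<in>{1..n-1}. f i \<subset> f j \<longrightarrow> i < j"
  using assms unfolding linear_extensions_def card_LT by auto

lemma LT_linear_extension: "f \<in> linear_extensions (LT n c) \<Longrightarrow> LT n f = LT n c"
  using linear_extensionD(2) by (simp add: LT_def bij_betw_def)

(* Reranking the clades along a linear extension f keeps every child pair a pair of blocks. *)
lemma block_of_linear_extension:
  assumes f: "f \<in> linear_extensions (LT n c)" and i: "i \<in> {1..n-1}" and m: "m \<in> {1..n-1}"
    and fi: "f i = c m" and X: "X \<in> blocks n c (m - 1)" and "X \<subset> c m"
  shows "X \<in> blocks n f (i - 1)"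
proof -
  note f_bij = linear_extensionD(2)[OF f] and f_mono = linear_extensionD(3)[OF f]
  have earlier: "c k \<in> f ` {1..i-1}" if k: "k \<in> {1..n-1}" "c k \<subset> c m" for k
  proof -
    have "c k \<in> f ` {1..n-1}" using f_bij k(1) unfolding bij_betw_def LT_def by auto
    then obtain i' where i': "i' \<in> {1..n-1}" "f i' = c k" by auto
    then have "i' < i" using f_mono i fi k(2) by auto
    with i' show ?thesis by force
  qed
  have X_in: "X \<in> leaf_clades n \<union> c ` {1..m-1}" and X_max: "\<not> (\<exists>T \<in> c ` {1..m-1}. X \<subset> T)"
    using X unfolding blocks_def by auto
  have "X \<in> leaf_clades n \<union> f ` {1..i-1}"
  proof (cases "X \<in> leaf_clades n")
    case False
    then obtain k where k: "k \<in> {1..m-1}" and "X = c k" using X_in by blast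
    moreover have "k \<in> {1..n-1}" using k m by auto
    ultimately show ?thesis using earlier[of k] \<open>X \<subset> c m\<close> by blast
  qed simp
  moreover have "\<not> X \<subset> f t" if t: "t \<in> {1..i-1}" for t
  proof
    assume "X \<subset> f t"
    have t': "t \<in> {1..n-1}" "t < i" using t i by auto
    then obtain s where s: "s \<in> {1..n-1}" "f t = c s"
      using f_bij unfolding bij_betw_def LT_def by blast
    consider "s < m" | "s = m" | "m < s" by arith
    then show False
    proof cases
      case 1
      then have "c s \<in> c ` {1..m-1}" using s(1) by auto
      then show False using X_max \<open>X \<subset> f t\<close> s(2) by blast
    next
      case 2
      then have "f t = f i" using s(2) fi by simp
      then have "t = i" using inj_onD[OF bij_betw_imp_inj_on[OF f_bij]] t'(1) i by blast
      then show False using t'(2) by simp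
    next
      case 3
      have "X \<noteq> {}"
        using X m partition_onD3[OF partition_on_blocks[of "m - 1"]] by auto
      then have "c m \<inter> c s \<noteq> {}" using \<open>X \<subset> f t\<close> \<open>X \<subset> c m\<close> s(2) by blast
      then have "c m \<subseteq> c s" using earlier_clade_subset_or_disjoint[OF m s(1) 3] by blast
      moreover have "c m \<noteq> c s" using inj_onD[OF inj_on_clades _ m s(1)] 3 by auto
      ultimately have "f i \<subset> f t" using fi s(2) by auto
      then have "i < t" using f_mono i t'(1) by blast
      then show False using t'(2) by simp
    qed
  qed
  ultimately show ?thesis unfolding blocks_def by blast
qed

lemma ranked_tree_linear_extension:
  assumes f: "f \<in> linear_extensions (LT n c)"
  shows "ranked_tree n f"
  unfolding ranked_tree_def
proof (intro conjI ballI allI impI)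
  show "f i = {}" if "i \<notin> {1..n-1}" for i using linear_extensionD(1)[OF f] that by blast
  fix i assume i: "i \<in> {1..n-1}"
  then obtain m where m: "m \<in> {1..n-1}" and fi: "f i = c m"
    using linear_extensionD(2)[OF f] unfolding bij_betw_def LT_def by blast
  obtain A B where AB: "is_child_pair n c m A B" using ex_child_pair m by blast
  have "A \<in> blocks n c (m - 1)" "B \<in> blocks n c (m - 1)" "A \<noteq> B" "c m = A \<union> B"
    using AB by (auto simp: is_child_pair_def)
  moreover have "A \<subset> c m" "B \<subset> c m"
    using child_pair_facts(1-3)[OF m AB] calculation(4) by auto
  ultimately have "is_child_pair n f i A B"
    using block_of_linear_extension[OF f i m fi] fi by (simp add: is_child_pair_def)
  then show "\<exists>A B. is_child_pair n f i A B" by blast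
qed

end

lemma GK_same_LT_eq_linear_extensions:
  assumes "g \<in> GK n T"
  shows "{c \<in> GK n T. LT n c = LT n g} = linear_extensions (LT n g)"
proof (intro equalityI subsetI)
  have g: "ranked_tree n g" and compatible: "compatible n T g" using assms by (auto simp: GK_def)
  fix c assume "c \<in> {c \<in> GK n T. LT n c = LT n g}"
  then have "ranked_tree n c" "LT n c = LT n g" by (auto simp: GK_def)
  then show "c \<in> linear_extensions (LT n g)" using in_linear_extensions_LT by metis
next
  have g: "ranked_tree n g" and compatible: "compatible n T g" using assms by (auto simp: GK_def)
  fix f assume f: "f \<in> linear_extensions (LT n g)"
  then have "LT n f = LT n g" by (rule LT_linear_extension[OF g])
  then have "compatible n T f"
    using compatible by (simp add: compatible_def clades_def LT_def)
  then show "f \<in> {c \<in> GK n T. LT n c = LT n g}"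
    using ranked_tree_linear_extension[OF g f] \<open>LT n f = LT n g\<close> by (simp add: GK_def)
qed

theorem proposition1:
  fixes n :: nat and T :: ptree and g :: "nat \<Rightarrow> nat set"
    and g1 g2 :: "nat \<Rightarrow> nat set"
  assumes "n \<ge> 2"
    and "kingman_pp n T"
    and "g \<in> GK n T"
    and "\<forall>i \<in> {1..n-1}. is_child_pair n g i (g1 i) (g2 i)"
  shows "real (cLT n T g) =
    (\<Prod>i = 1..n-1. fact (card (g1 i) + card (g2 i) - 2)
                     / (fact (card (g1 i) - 1) * fact (card (g2 i) - 1)))"
proof -
  have g: "ranked_tree n g" using assms(3) by (simp add: GK_def)
  let ?P = "LT n g" and ?hooks = "\<Prod>i=1..n-1. real (card (g i) - 1)"
  have "finite ?P" by (simp add: LT_def)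
  then have "real (card (linear_extensions ?P)) * ?hooks = fact (n - 1)"
    using linear_extensions_hook_formula[of ?P] empty_notin_LT[OF g] laminar_LT[OF g]
    by (simp add: prod_hook_LT[OF g] card_LT[OF g])
  moreover have "(\<Prod>i=1..n-1. merge_weight (g1 i) (g2 i)) * ?hooks = fact (n - 1)"
    using prod_merge_weight_telescope[OF g assms(4), of "n - 1"] blocks_last[OF g] assms(1) by simp
  ultimately have "real (card (linear_extensions ?P)) * ?hooks
      = (\<Prod>i=1..n-1. merge_weight (g1 i) (g2 i)) * ?hooks"
    by simp
  moreover have "?hooks \<noteq> 0" using two_le_card_clade[OF g] by fastforce
  ultimately have "real (card (linear_extensions ?P)) = (\<Prod>i=1..n-1. merge_weight (g1 i) (g2 i))"
    by simp
  then show ?thesis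
    by (simp add: cLT_def GK_same_LT_eq_linear_extensions[OF assms(3)] merge_weight_def)
qed

end
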